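(* Let $(X,d)$ be a metric space, $\lambda\ge 0$, and $\ell:X\to[0,+\infty)$ a lower semicontinuous function with $\inf_X\ell=0$. Suppose $u$ is a supersolution of $(\mathcal{G}_\lambda)$. Then the function $T^\infty u$ is a solution of $(\mathcal{G}_\lambda)$.
   Context: Global slope: for $u:X\to\mathbb{R}\cup\{+\infty\}$, $G[u](x)=\sup_{y\neq x}\frac{(u(x)-u(y))_+}{d(x,y)}$ if $u(x)<+\infty$, and $G[u](x)=+\infty$ otherwise ($\alpha_+=\max\{\alpha,0\}$). Equation $(\mathcal{G}_\lambda)$: $\lambda u(x)+G[u](x)=\ell(x)$ for all $x\in X$, with $\inf_X u=0$. A subsolution is a function $u:X\to\mathbb{R}\cup\{+\infty\}$ with $\inf_X u=0$ and $\lambda u+G[u]\le\ell$ on $X$; a supersolution is a lower semicontinuous $v:X\to\mathbb{R}\cup\{+\infty\}$ with $\inf_X v=0$ and $\lambda v+G[v]\ge \ell$ on $X$; a solution is a lower semicontinuous function that is both a sub- and a supersolution. For $u:X\to[0,+\infty]$, define $Tu(x)=\inf_{y\in X}\frac{u(y)+\ell(x)d(x,y)}{1+\lambda d(x,y)}$; then $u\ge Tu\ge T^2u\ge\cdots\ge 0$, and $T^\infty u(x):=\lim_{n\to\infty}T^nu(x)$. *)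

theory Defs
  imports "HOL-Analysis.Analysis" "HOL-Library.Extended_Real"
begin

(* Extended-real-valued functions on a metric space X (the whole type 'a).
   Functions X -> R \<union> {+\<infinity>} are modelled as 'a \<Rightarrow> ereal never taking -\<infinity>. *)

definition lsc :: "('a::topological_space \<Rightarrow> 'b::linorder_topology) \<Rightarrow> bool" where
  "lsc f \<longleftrightarrow> (\<forall>x c. c < f x \<longrightarrow> eventually (\<lambda>y. c < f y) (nhds x))"

definition gslope :: "('a::metric_space \<Rightarrow> ereal) \<Rightarrow> 'a \<Rightarrow> ereal" where
  "gslope u x = (if u x < \<infinity>
     then Sup (insert 0 ((\<lambda>y. max (u x - u y) 0 / ereal (dist x y)) ` {y. y \<noteq> x}))
     else \<infinity>)"

definition no_minf :: "('a \<Rightarrow> ereal) \<Rightarrow> bool" where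
  "no_minf u \<longleftrightarrow> (\<forall>x. u x \<noteq> -\<infinity>)"

definition subsolution :: "real \<Rightarrow> ('a::metric_space \<Rightarrow> real) \<Rightarrow> ('a \<Rightarrow> ereal) \<Rightarrow> bool" where
  "subsolution lam l u \<longleftrightarrow> no_minf u \<and> (INF x. u x) = 0 \<and>
     (\<forall>x. ereal lam * u x + gslope u x \<le> ereal (l x))"

definition supersolution :: "real \<Rightarrow> ('a::metric_space \<Rightarrow> real) \<Rightarrow> ('a \<Rightarrow> ereal) \<Rightarrow> bool" where
  "supersolution lam l v \<longleftrightarrow> lsc v \<and> no_minf v \<and> (INF x. v x) = 0 \<and>
     (\<forall>x. ereal lam * v x + gslope v x \<ge> ereal (l x))"

definition solution :: "real \<Rightarrow> ('a::metric_space \<Rightarrow> real) \<Rightarrow> ('a \<Rightarrow> ereal) \<Rightarrow> bool" where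
  "solution lam l u \<longleftrightarrow> lsc u \<and> subsolution lam l u \<and> supersolution lam l u"

definition Top :: "real \<Rightarrow> ('a::metric_space \<Rightarrow> real) \<Rightarrow> ('a \<Rightarrow> ereal) \<Rightarrow> 'a \<Rightarrow> ereal" where
  "Top lam l u x = (INF y. (u y + ereal (l x * dist x y)) / ereal (1 + lam * dist x y))"

definition Tinf :: "real \<Rightarrow> ('a::metric_space \<Rightarrow> real) \<Rightarrow> ('a \<Rightarrow> ereal) \<Rightarrow> 'a \<Rightarrow> ereal" where
  "Tinf lam l u x = lim (\<lambda>n. ((Top lam l ^^ n) u) x)"

end

theory Submission
  imports Defs
begin

text \<open>
  The iterates \<open>T\<^sup>n u\<close> decrease, and their limit \<open>V = T\<^sup>\<infinity>u\<close> is a finite fixed point of \<open>T\<close>;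
  the inequality \<open>V \<le> TV\<close> says \<open>V x - V y \<le> (\<ell> x - \<lambda> V x) d(x,y)\<close>, which gives lower
  semicontinuity and the subsolution property. Where \<open>V = u\<close> the supersolution inequality
  of \<open>u\<close> passes to \<open>V\<close>, because the global slope can only grow when the function is lowered
  away from the contact point. Where \<open>V x < u x\<close> and the inequality failed, a small cone
  \<open>V x + \<kappa> - b d(x,\<cdot>)\<close> with slope \<open>b\<close> between \<open>G[V](x)\<close> and \<open>\<ell> x - \<lambda> V x\<close> would stay
  below every iterate (near \<open>x\<close> it satisfies \<open>\<psi> \<le> T\<psi>\<close>, far from \<open>x\<close> it lies below \<open>V\<close>),
  forcing \<open>V x \<ge> V x + \<kappa>\<close>.
\<close>

lemma ereal_le_add_divide_iff:
  fixes w :: ereal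
  assumes "k > 0" "w \<noteq> -\<infinity>"
  shows "ereal c \<le> (w + ereal a) / ereal k \<longleftrightarrow> ereal (c * k - a) \<le> w"
  using assms by (cases w) (auto simp: ereal_divide pos_le_divide_eq)

lemma le_Top_iff:
  assumes "lam \<ge> 0" "\<And>y. w y \<noteq> -\<infinity>"
  shows "ereal c \<le> Top lam l w z \<longleftrightarrow>
    (\<forall>y. ereal (c * (1 + lam * dist z y) - l z * dist z y) \<le> w y)"
proof -
  have "1 + lam * dist z y > 0" for y
    using assms(1) by (simp add: add_pos_nonneg)
  then show ?thesis
    unfolding Top_def le_INF_iff using ereal_le_add_divide_iff assms(2) by auto
qed

lemma le_Top_real_iff:
  assumes "lam \<ge> 0"
  shows "ereal (V z) \<le> Top lam l (\<lambda>y. ereal (V y)) z \<longleftrightarrow>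
    (\<forall>y. V z * (1 + lam * dist z y) - l z * dist z y \<le> V y)"
  using le_Top_iff[OF assms, of "\<lambda>y. ereal (V y)"] by simp

lemma Top_le_self: "Top lam l w z \<le> w z"
proof -
  have "Top lam l w z \<le> (w z + ereal (l z * dist z z)) / ereal (1 + lam * dist z z)"
    unfolding Top_def by (rule INF_lower) simp
  also have "\<dots> = w z"
    by (cases "w z") (auto simp: ereal_divide)
  finally show ?thesis .
qed

lemma Top_mono:
  assumes "lam \<ge> 0" "\<And>y. w y \<le> w' y"
  shows "Top lam l w z \<le> Top lam l w' z"
  unfolding Top_def using assms
  by (intro INF_mono') (auto intro!: ereal_divide_right_mono add_right_mono simp: add_pos_nonneg)

lemma Top_nonneg:
  assumes "lam \<ge> 0" "l z \<ge> 0" "\<And>y. w y \<ge> 0"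
  shows "Top lam l w z \<ge> 0"
proof -
  have "w y \<noteq> -\<infinity>" for y
    using assms(3)[of y] by auto
  moreover have "ereal (0 - l z * dist z y) \<le> w y" for y
    using assms(2) order_trans[OF _ assms(3)] by (simp add: zero_ereal_def)
  ultimately have "ereal 0 \<le> Top lam l w z"
    by (subst le_Top_iff[OF assms(1)]) auto
  then show ?thesis by (simp add: zero_ereal_def)
qed

lemma funpow_Top_nonneg:
  assumes "lam \<ge> 0" "\<And>z. l z \<ge> 0" "\<And>z. u z \<ge> 0"
  shows "(Top lam l ^^ n) u z \<ge> 0"
  using assms(3) by (induction n arbitrary: z) (simp_all add: Top_nonneg assms(1,2))

lemma Tinf_eq_INF: "Tinf lam l u z = (INF n. (Top lam l ^^ n) u z)"
proof -
  have "decseq (\<lambda>n. (Top lam l ^^ n) u z)"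
    by (intro decseq_SucI) (simp add: Top_le_self)
  then show ?thesis
    unfolding Tinf_def by (intro limI LIMSEQ_INF)
qed

lemma Tinf_le_funpow: "Tinf lam l u z \<le> (Top lam l ^^ n) u z"
  unfolding Tinf_eq_INF by (rule INF_lower) simp

lemma Tinf_le_self: "Tinf lam l u z \<le> u z"
  using Tinf_le_funpow[of lam l u z 0] by simp

lemma Tinf_real:
  assumes "lam \<ge> 0" "\<And>z. l z \<ge> 0" "\<And>z. u z \<ge> 0" "(INF x. u x) < \<infinity>"
  obtains V where "Tinf lam l u = (\<lambda>z. ereal (V z))" "\<And>z. 0 \<le> V z"
proof
  obtain y where y: "u y < \<infinity>"
    using assms(4) unfolding INF_less_iff by blast
  have "Tinf lam l u z < \<infinity>" for z
  proof -
    have "Tinf lam l u z \<le> Top lam l u z"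
      using Tinf_le_funpow[of lam l u z 1] by simp
    also have "\<dots> \<le> (u y + ereal (l z * dist z y)) / ereal (1 + lam * dist z y)"
      unfolding Top_def by (rule INF_lower) simp
    also have "\<dots> < \<infinity>"
      using y assms(3)[of y] add_pos_nonneg[of 1 "lam * dist z y"] assms(1)
      by (cases "u y") (auto simp: ereal_divide)
    finally show ?thesis .
  qed
  moreover have "Tinf lam l u z \<ge> 0" for z
    unfolding Tinf_eq_INF using funpow_Top_nonneg[OF assms(1-3)] by (rule INF_greatest)
  ultimately show "Tinf lam l u = (\<lambda>z. ereal (real_of_ereal (Tinf lam l u z)))"
    and "0 \<le> real_of_ereal (Tinf lam l u z)" for z
    by (auto simp: ereal_real real_of_ereal_pos)
qed

lemma Tinf_le_Top_Tinf:
  assumes "lam \<ge> 0" "\<And>z. l z \<ge> 0" "\<And>z. u z \<ge> 0"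
    and V: "Tinf lam l u = (\<lambda>z. ereal (V z))"
  shows "ereal (V z) \<le> Top lam l (\<lambda>y. ereal (V y)) z"
proof -
  have "ereal (V z * (1 + lam * dist z y) - l z * dist z y) \<le> ereal (V y)" for y
  proof -
    have "ereal (V z * (1 + lam * dist z y) - l z * dist z y) \<le> (Top lam l ^^ n) u y" for n
    proof -
      have "ereal (V z) \<le> (Top lam l ^^ Suc n) u z"
        using Tinf_le_funpow[of lam l u z "Suc n"] V by simp
      then have "ereal (V z) \<le> Top lam l ((Top lam l ^^ n) u) z"
        by simp
      moreover have "(Top lam l ^^ n) u y \<noteq> -\<infinity>" for y
        using funpow_Top_nonneg[OF assms(1-3), where n=n and z=y] by auto
      ultimately show ?thesis
        using le_Top_iff[OF assms(1)] by metis
    qed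
    then have "ereal (V z * (1 + lam * dist z y) - l z * dist z y) \<le> Tinf lam l u y"
      unfolding Tinf_eq_INF by (rule INF_greatest)
    then show ?thesis
      using V by simp
  qed
  then show ?thesis
    unfolding le_Top_real_iff[OF assms(1)] by simp
qed

lemma le_add_mult_dist_if_le_Top:
  assumes "lam \<ge> 0" "0 \<le> V x" "ereal (V x) \<le> Top lam l (\<lambda>y. ereal (V y)) x"
  shows "V x \<le> V y + l x * dist x y"
proof -
  have "V x * (1 + lam * dist x y) - l x * dist x y \<le> V y"
    using assms(3)[unfolded le_Top_real_iff[OF assms(1)]] by blast
  moreover have "V x \<le> V x * (1 + lam * dist x y)"
    using assms(1,2) by (simp add: distrib_left)
  ultimately show ?thesis
    by linarith
qed

lemma lsc_if_le_Top:
  assumes "lam \<ge> 0" "\<And>x. 0 \<le> V x" "\<And>x. ereal (V x) \<le> Top lam l (\<lambda>y. ereal (V y)) x"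
  shows "lsc (\<lambda>x. ereal (V x))"
  unfolding lsc_def
proof (intro allI impI)
  fix x c
  assume "c < ereal (V x)"
  moreover have "((\<lambda>y. ereal (V x - l x * dist x y)) \<longlongrightarrow> ereal (V x)) (nhds x)"
    by (auto intro!: tendsto_eq_intros filterlim_ident)
  ultimately have "eventually (\<lambda>y. c < ereal (V x - l x * dist x y)) (nhds x)"
    by (rule order_tendstoD(1)[rotated])
  then show "eventually (\<lambda>y. c < ereal (V y)) (nhds x)"
  proof (rule eventually_mono)
    fix y
    assume "c < ereal (V x - l x * dist x y)"
    also have "V x \<le> V y + l x * dist x y"
      by (rule le_add_mult_dist_if_le_Top[OF assms(1,2,3)])
    then have "ereal (V x - l x * dist x y) \<le> ereal (V y)"
      by simp
    finally show "c < ereal (V y)" .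
  qed
qed

lemma gslope_nonneg: "gslope u x \<ge> 0"
  unfolding gslope_def by (auto intro: Sup_upper)

lemma gslope_real_le_iff:
  assumes "s \<ge> 0"
  shows "gslope (\<lambda>z. ereal (V z)) x \<le> ereal s \<longleftrightarrow> (\<forall>y. V x - V y \<le> s * dist x y)"
proof -
  define F where "F y = max (ereal (V x) - ereal (V y)) 0 / ereal (dist x y)" for y
  have F_le_iff: "F y \<le> ereal s \<longleftrightarrow> V x - V y \<le> s * dist x y" if "y \<noteq> x" for y
  proof (cases "V x \<le> V y")
    case True
    then have "V x - V y \<le> s * dist x y"
      using mult_nonneg_nonneg[OF assms zero_le_dist[of x y]] by linarith
    then show ?thesis
      using True assms by (simp add: F_def max_def zero_ereal_def)
  next
    case False
    then show ?thesis
      using that by (simp add: F_def max_def ereal_divide pos_divide_le_eq mult.commute)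
  qed
  have "gslope (\<lambda>z. ereal (V z)) x = Sup (insert 0 (F ` {y. y \<noteq> x}))"
    unfolding gslope_def F_def by simp
  then show ?thesis
    using assms F_le_iff by (simp add: Sup_le_iff) (metis diff_self dist_self mult_zero_right order_refl)
qed

lemma gslope_le_at_contact:
  assumes "\<And>y. v y \<le> u y" "u x = v x"
  shows "gslope u x \<le> gslope v x"
proof (cases "u x < \<infinity>")
  case True
  have "max (u x - u y) 0 / ereal (dist x y) \<le> max (v x - v y) 0 / ereal (dist x y)"
    if "y \<noteq> x" for y
  proof (rule ereal_divide_right_mono)
    have "u x - u y \<le> v x - v y"
      using ereal_minus_mono[OF order.refl assms(1)] assms(2) by simp
    then show "max (u x - u y) 0 \<le> max (v x - v y) 0"
      by (rule max.mono) simp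
  qed (use that in simp)
  moreover have "v x < \<infinity>"
    using True assms(2) by simp
  ultimately show ?thesis
    unfolding gslope_def if_P[OF True] if_P[OF \<open>v x < \<infinity>\<close>]
    by (intro Sup_mono) (auto simp: assms(2))
qed (use assms(2) in \<open>simp add: gslope_def\<close>)

lemma subsolution_if_le_Top:
  assumes "lam \<ge> 0" "\<And>x. 0 \<le> l x" "\<And>x. 0 \<le> V x" "(INF x. ereal (V x)) = 0"
    and le_Top: "\<And>x. ereal (V x) \<le> Top lam l (\<lambda>y. ereal (V y)) x"
  shows "subsolution lam l (\<lambda>x. ereal (V x))"
  unfolding subsolution_def no_minf_def
proof (intro conjI allI)
  fix x
  define a where "a = l x - lam * V x"
  have slope: "V x - V y \<le> a * dist x y" for y
  proof -
    have "V x * (1 + lam * dist x y) - l x * dist x y \<le> V y"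
      using le_Top[of x, unfolded le_Top_real_iff[OF assms(1)]] by blast
    moreover have "V x * (1 + lam * dist x y) - l x * dist x y = V x - a * dist x y"
      unfolding a_def by (simp add: algebra_simps)
    ultimately show ?thesis
      by linarith
  qed
  have "0 \<le> a"
  proof (cases "V x = 0")
    case True
    then show ?thesis
      using assms(2) by (simp add: a_def)
  next
    case False
    then have "(INF z. ereal (V z)) < ereal (V x)"
      using assms(3)[of x] assms(4) by (simp add: order.not_eq_order_implies_strict)
    then obtain y where "V y < V x"
      unfolding INF_less_iff by auto
    then have "0 < a * dist x y"
      using slope[of y] by linarith
    then show ?thesis
      by (simp add: zero_less_mult_iff)
  qed
  then have "gslope (\<lambda>z. ereal (V z)) x \<le> ereal a"
    using slope gslope_real_le_iff by blast
  then have "ereal (lam * V x) + gslope (\<lambda>z. ereal (V z)) x \<le> ereal (lam * V x) + ereal a"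
    by (rule add_left_mono)
  then show "ereal lam * ereal (V x) + gslope (\<lambda>z. ereal (V z)) x \<le> ereal (l x)"
    by (simp add: a_def)
qed (use assms(4) in simp_all)

lemma le_Top_if_lipschitz:
  assumes "lam \<ge> 0" "\<And>y. \<psi> z - b * dist z y \<le> \<psi> y" "lam * \<psi> z + b \<le> l z"
  shows "ereal (\<psi> z) \<le> Top lam l (\<lambda>y. ereal (\<psi> y)) z"
  unfolding le_Top_real_iff[OF assms(1)]
proof
  fix y
  have "b * dist z y \<le> (l z - lam * \<psi> z) * dist z y"
    using assms(3) by (intro mult_right_mono) auto
  moreover have "\<psi> z * (1 + lam * dist z y) - l z * dist z y = \<psi> z - (l z - lam * \<psi> z) * dist z y"
    by (simp add: algebra_simps)
  ultimately show "\<psi> z * (1 + lam * dist z y) - l z * dist z y \<le> \<psi> y"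
    using assms(2)[of y] by linarith
qed

lemma le_Tinf_if_le_Top_on:
  assumes "lam \<ge> 0"
    and "\<And>z. z \<in> B \<Longrightarrow> \<psi> z \<le> u z"
    and "\<And>z. z \<in> B \<Longrightarrow> \<psi> z \<le> Top lam l \<psi> z"
    and "\<And>z. z \<notin> B \<Longrightarrow> \<psi> z \<le> Tinf lam l u z"
  shows "\<psi> z \<le> Tinf lam l u z"
proof -
  have "\<psi> z \<le> (Top lam l ^^ n) u z" for n
  proof (induction n arbitrary: z)
    case 0
    show ?case
      using assms(2,4)[of z] Tinf_le_self[of lam l u z] by (cases "z \<in> B") auto
  next
    case (Suc n)
    show ?case
    proof (cases "z \<in> B")
      case True
      then have "\<psi> z \<le> Top lam l \<psi> z"
        by (rule assms(3))
      also have "\<dots> \<le> Top lam l ((Top lam l ^^ n) u) z"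
        using assms(1) Suc.IH by (rule Top_mono)
      finally show ?thesis
        by simp
    next
      case False
      then have "\<psi> z \<le> Tinf lam l u z"
        by (rule assms(4))
      then show ?thesis
        using Tinf_le_funpow[of lam l u z "Suc n"] by (rule order_trans)
    qed
  qed
  then show ?thesis
    unfolding Tinf_eq_INF by (rule INF_greatest)
qed

lemma cone_le_Tinf:
  assumes "lam \<ge> 0" "b \<ge> 0"
    and "\<And>z. dist x z < r \<Longrightarrow> ereal (m + \<kappa>) \<le> u z"
    and "\<And>z. dist x z < r \<Longrightarrow> lam * (m + \<kappa>) + b \<le> l z"
    and "\<And>z. dist x z \<ge> r \<Longrightarrow> ereal (m + \<kappa> - b * dist x z) \<le> Tinf lam l u z"
  shows "ereal (m + \<kappa>) \<le> Tinf lam l u x"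
proof -
  define \<psi> where "\<psi> z = m + \<kappa> - b * dist x z" for z
  have "ereal (\<psi> x) \<le> Tinf lam l u x"
  proof (rule le_Tinf_if_le_Top_on[where B = "ball x r"])
    fix z
    assume "z \<in> ball x r"
    moreover have "\<psi> z \<le> m + \<kappa>"
      using assms(2) by (simp add: \<psi>_def)
    ultimately show "ereal (\<psi> z) \<le> u z"
      using assms(3)[of z] by (auto elim: order_trans[rotated])
    show "ereal (\<psi> z) \<le> Top lam l (\<lambda>y. ereal (\<psi> y)) z"
    proof (rule le_Top_if_lipschitz[OF assms(1)])
      show "\<psi> z - b * dist z y \<le> \<psi> y" for y
        using mult_left_mono[OF dist_triangle[of x y z] assms(2)]
        by (simp add: \<psi>_def algebra_simps)
      have "lam * \<psi> z \<le> lam * (m + \<kappa>)"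
        using \<open>\<psi> z \<le> m + \<kappa>\<close> assms(1) by (rule mult_left_mono)
      then show "lam * \<psi> z + b \<le> l z"
        using assms(4)[of z] \<open>z \<in> ball x r\<close> by simp
    qed
  qed (use assms(1,5) in \<open>auto simp: \<psi>_def\<close>)
  then show ?thesis
    by (simp add: \<psi>_def)
qed

lemma pos_bounded_exists:
  fixes a b c lam :: real
  assumes "a > 0" "b > 0" "c > 0" "lam \<ge> 0"
  shows "\<exists>\<kappa>>0. \<kappa> \<le> a \<and> \<kappa> \<le> b \<and> lam * \<kappa> \<le> c"
proof -
  define \<kappa> where "\<kappa> = min a (min b (c / (lam + 1)))"
  have "\<kappa> > 0" "\<kappa> \<le> a" "\<kappa> \<le> b"
    using assms by (simp_all add: \<kappa>_def)
  moreover have "lam * \<kappa> \<le> (lam + 1) * (c / (lam + 1))"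
    using \<open>\<kappa> > 0\<close> assms(4) by (intro mult_mono) (simp_all add: \<kappa>_def)
  then have "lam * \<kappa> \<le> c"
    using assms(4) by simp
  ultimately show ?thesis
    by blast
qed

lemma Tinf_supersolution_ineq_below:
  assumes lam: "lam \<ge> 0" and l: "lsc l" and u: "lsc u"
    and V: "Tinf lam l u = (\<lambda>x. ereal (V x))" and below: "ereal (V x) < u x"
  shows "ereal (l x) \<le> ereal (lam * V x) + gslope (\<lambda>x. ereal (V x)) x"
proof (rule ccontr)
  assume "\<not> ?thesis"
  then obtain s where s: "gslope (\<lambda>x. ereal (V x)) x = ereal s" and "lam * V x + s < l x"
    using gslope_nonneg[of "\<lambda>x. ereal (V x)" x] by (cases "gslope (\<lambda>x. ereal (V x)) x") auto
  define \<delta> where "\<delta> = l x - lam * V x - s"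
  have "s \<ge> 0" "\<delta> > 0"
    using gslope_nonneg[of "\<lambda>x. ereal (V x)" x] s \<open>lam * V x + s < l x\<close> by (auto simp: \<delta>_def)
  have slope: "V x - V z \<le> s * dist x z" for z
    using gslope_real_le_iff[OF \<open>s \<ge> 0\<close>, where V = V and x = x] s by simp
  obtain c where "V x < c" "ereal c < u x"
    using ereal_dense2[OF below] by auto
  have "eventually (\<lambda>z. ereal c < u z \<and> l x - \<delta> / 4 < l z) (nhds x)"
    using u l \<open>ereal c < u x\<close> \<open>\<delta> > 0\<close> unfolding lsc_def by (intro eventually_conj) auto
  then obtain r where "r > 0" and r: "\<And>z. dist z x < r \<Longrightarrow> ereal c < u z \<and> l x - \<delta> / 4 < l z"
    unfolding eventually_nhds_metric by blast
  \<comment> \<open>The cone has slope \<open>b = s + \<delta>/2\<close>; the bounds on \<open>\<kappa>\<close> put it below \<open>u\<close> near \<open>x\<close>,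
    below \<open>V\<close> off the ball, and keep \<open>\<lambda> \<psi> + b \<le> \<ell>\<close> on the ball.\<close>
  obtain \<kappa> where "\<kappa> > 0" "\<kappa> \<le> c - V x" "\<kappa> \<le> \<delta> * r / 2" "lam * \<kappa> \<le> \<delta> / 4"
    using pos_bounded_exists[of "c - V x" "\<delta> * r / 2" "\<delta> / 4" lam] \<open>V x < c\<close> \<open>\<delta> > 0\<close> \<open>r > 0\<close> lam
    by auto
  have "ereal (V x + \<kappa>) \<le> Tinf lam l u x"
  proof (rule cone_le_Tinf[where b = "s + \<delta> / 2" and r = r])
    fix z
    assume "dist x z < r"
    then have "ereal c < u z" "l x - \<delta> / 4 < l z"
      using r by (auto simp: dist_commute)
    then show "ereal (V x + \<kappa>) \<le> u z"
      using \<open>\<kappa> \<le> c - V x\<close> by (auto elim!: order.strict_implies_order[THEN order_trans[rotated]])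
    have "lam * (V x + \<kappa>) = lam * V x + lam * \<kappa>"
      by (simp add: distrib_left)
    then show "lam * (V x + \<kappa>) + (s + \<delta> / 2) \<le> l z"
      using \<open>l x - \<delta> / 4 < l z\<close> \<open>lam * \<kappa> \<le> \<delta> / 4\<close> \<delta>_def by linarith
  next
    fix z
    assume "dist x z \<ge> r"
    then have "\<delta> * r \<le> \<delta> * dist x z"
      using \<open>\<delta> > 0\<close> by (simp add: mult_left_mono)
    moreover have "(s + \<delta> / 2) * dist x z = s * dist x z + \<delta> * dist x z / 2"
      by (simp add: algebra_simps)
    ultimately have "V x + \<kappa> - (s + \<delta> / 2) * dist x z \<le> V z"
      using slope[of z] \<open>\<kappa> \<le> \<delta> * r / 2\<close> by linarith
    then show "ereal (V x + \<kappa> - (s + \<delta> / 2) * dist x z) \<le> Tinf lam l u z"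
      using V by simp
  qed (use lam \<open>s \<ge> 0\<close> \<open>\<delta> > 0\<close> in auto)
  then show False
    using V \<open>\<kappa> > 0\<close> by simp
qed

lemma Tinf_supersolution_ineq:
  assumes "lam \<ge> 0" "lsc l" "supersolution lam l u"
    and V: "Tinf lam l u = (\<lambda>x. ereal (V x))"
  shows "ereal (l x) \<le> ereal lam * ereal (V x) + gslope (\<lambda>x. ereal (V x)) x"
proof (cases "ereal (V x) < u x")
  case True
  then show ?thesis
    using Tinf_supersolution_ineq_below[OF assms(1,2) _ V] assms(3)
    by (simp add: supersolution_def)
next
  case False
  have V_le_u: "ereal (V y) \<le> u y" for y
    using Tinf_le_self[of lam l u y] V by simp
  then have "u x = ereal (V x)"
    using False by (metis antisym not_le)
  have "ereal (l x) \<le> ereal lam * u x + gslope u x"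
    using assms(3) by (simp add: supersolution_def)
  also have "\<dots> \<le> ereal lam * ereal (V x) + gslope (\<lambda>x. ereal (V x)) x"
    using gslope_le_at_contact[of "\<lambda>x. ereal (V x)" u, OF V_le_u \<open>u x = ereal (V x)\<close>]
      \<open>u x = ereal (V x)\<close>
    by (simp add: add_left_mono)
  finally show ?thesis .
qed

lemma INF_Tinf_eq_0:
  assumes "lam \<ge> 0" "\<And>z. l z \<ge> 0" "\<And>z. u z \<ge> 0" "(INF x. u x) = 0"
  shows "(INF x. Tinf lam l u x) = 0"
proof (rule antisym)
  show "(INF x. Tinf lam l u x) \<le> 0"
    using INF_mono'[of "Tinf lam l u" u UNIV, OF Tinf_le_self] assms(4) by simp
  show "0 \<le> (INF x. Tinf lam l u x)"
    unfolding Tinf_eq_INF using funpow_Top_nonneg[OF assms(1-3)] by (intro INF_greatest)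
qed

theorem theorem3p6:
  fixes lam :: real and l :: "'a::metric_space \<Rightarrow> real" and u :: "'a \<Rightarrow> ereal"
  assumes "lam \<ge> 0"
    and "\<forall>x. l x \<ge> 0"
    and "lsc l"
    and "(INF x. l x) = 0"
    and "supersolution lam l u"
  shows "solution lam l (Tinf lam l u)"
proof -
  have l: "\<And>x. l x \<ge> 0"
    using assms(2) by blast
  have u_inf: "(INF x. u x) = 0"
    using assms(5) by (simp add: supersolution_def)
  then have u_nonneg: "\<And>x. 0 \<le> u x"
    by (metis INF_lower UNIV_I)
  obtain V where V: "Tinf lam l u = (\<lambda>x. ereal (V x))" and V_nonneg: "\<And>x. 0 \<le> V x"
    by (rule Tinf_real[of lam l u]) (use assms(1) l u_nonneg u_inf in auto)
  have V_le_Top: "\<And>x. ereal (V x) \<le> Top lam l (\<lambda>y. ereal (V y)) x"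
    using Tinf_le_Top_Tinf[OF assms(1) l u_nonneg V] .
  have V_inf: "(INF x. ereal (V x)) = 0"
    using INF_Tinf_eq_0[of lam l u, OF assms(1) l u_nonneg u_inf] by (simp add: V)
  have "lsc (\<lambda>x. ereal (V x))"
    by (rule lsc_if_le_Top[OF assms(1) V_nonneg V_le_Top])
  moreover have "subsolution lam l (\<lambda>x. ereal (V x))"
    by (rule subsolution_if_le_Top[of lam l V]) (use assms(1) l V_nonneg V_inf V_le_Top in auto)
  moreover have "\<And>x. ereal (l x) \<le> ereal lam * ereal (V x) + gslope (\<lambda>x. ereal (V x)) x"
    using Tinf_supersolution_ineq[OF assms(1,3,5) V] .
  ultimately show ?thesis
    unfolding V solution_def supersolution_def no_minf_def using V_inf by simp
qed

end
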